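(* Fix $\delta\in[0,1/2]$. Alice flips two independent coins $c_1,c_2\in\{0,1\}$ with $\Pr[c_1=0]=\Pr[c_2=0]=\tfrac12+\delta$. Bob, without knowledge of $c_1,c_2$, sends Alice a classical bit $b$ and a single-qubit state $\rho$ (where $b$ may be chosen at random with probabilities $q_0,q_1$ and the state $\rho_b$ may depend on $b$). Alice measures $\rho$ in the computational basis $\{|0\rangle,|1\rangle\}$ if $c_1=0$ and in the Hadamard basis $\{|+\rangle,|-\rangle\}$ if $c_1=1$, obtaining $a\in\{0,1\}$. Bob wins if $a=b$ when $c_2=0$, and $a\ne b$ when $c_2=1$. Then Bob's maximal winning probability over all strategies is $$\frac12+\delta\sqrt{\frac{1+4\delta^2}{2}},$$ achieved by the deterministic strategy $b=0$ with $\rho=\tfrac12(I+r_x\sigma_x+r_z\sigma_z)$, $r_x=\frac{1-2\delta}{\sqrt{2+8\delta^2}}$, $r_z=\frac{1+2\delta}{\sqrt{2+8\delta^2}}$. In particular the value is $1/2$ for $\delta=0$ and $1$ for $\delta=1/2$.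
   Context: $|\pm\rangle=\tfrac{1}{\sqrt2}(|0\rangle\pm|1\rangle)$; measurement outcome $0$ corresponds to $|0\rangle$ or $|+\rangle$ and $1$ to $|1\rangle$ or $|-\rangle$; $\sigma_x,\sigma_z$ are Pauli matrices. *)

theory Defs
  imports "HOL-Analysis.Analysis"
begin

text \<open>Single-qubit operators are 2x2 complex matrices, indexed by the type 2
  (index 1 = |0>, index 2 = |1>). Bits are naturals 0/1.\<close>

type_synonym qmat = "complex^2^2"
type_synonym qvec = "complex^2"

definition expval :: "qmat \<Rightarrow> qvec \<Rightarrow> complex" where
  "expval \<rho> \<psi> = (\<Sum>i\<in>UNIV. cnj (\<psi> $ i) * ((\<rho> *v \<psi>) $ i))"

definition trace2 :: "qmat \<Rightarrow> complex" where
  "trace2 \<rho> = (\<Sum>i\<in>UNIV. \<rho> $ i $ i)"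

definition density :: "qmat \<Rightarrow> bool" where
  "density \<rho> \<longleftrightarrow>
     (\<forall>i j. \<rho> $ i $ j = cnj (\<rho> $ j $ i)) \<and>
     (\<forall>v. Im (expval \<rho> v) = 0 \<and> Re (expval \<rho> v) \<ge> 0) \<and>
     trace2 \<rho> = 1"

definition ket0 :: qvec where "ket0 = (\<chi> i. if i = 1 then 1 else 0)"
definition ket1 :: qvec where "ket1 = (\<chi> i. if i = 1 then 0 else 1)"
definition ketp :: qvec where
  "ketp = (\<chi> i. complex_of_real (1 / sqrt 2))"
definition ketm :: qvec where
  "ketm = (\<chi> i. if i = 1 then complex_of_real (1 / sqrt 2) else - complex_of_real (1 / sqrt 2))"

definition meas_vec :: "nat \<Rightarrow> nat \<Rightarrow> qvec" where
  "meas_vec c1 a = (if c1 = 0 then (if a = 0 then ket0 else ket1)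
                    else (if a = 0 then ketp else ketm))"

definition prob_outcome :: "qmat \<Rightarrow> nat \<Rightarrow> nat \<Rightarrow> real" where
  "prob_outcome \<rho> c1 a = Re (expval \<rho> (meas_vec c1 a))"

definition coin :: "real \<Rightarrow> nat \<Rightarrow> real" where
  "coin \<delta> c = (if c = 0 then 1/2 + \<delta> else 1/2 - \<delta>)"

definition win_prob :: "real \<Rightarrow> (nat \<Rightarrow> real) \<Rightarrow> (nat \<Rightarrow> qmat) \<Rightarrow> real" where
  "win_prob \<delta> q \<rho> =
     (\<Sum>b\<in>{0,1::nat}. q b * (\<Sum>c1\<in>{0,1::nat}. \<Sum>c2\<in>{0,1::nat}.
        coin \<delta> c1 * coin \<delta> c2 *
        prob_outcome (\<rho> b) c1 (if c2 = 0 then b else 1 - b)))"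

definition sigma_x :: qmat where
  "sigma_x = (\<chi> i j. if i = j then 0 else 1)"
definition sigma_z :: qmat where
  "sigma_z = (\<chi> i j. if i = j then (if i = 1 then 1 else -1) else 0)"
definition id2 :: qmat where
  "id2 = (\<chi> i j. if i = j then 1 else 0)"

definition rho_bloch :: "real \<Rightarrow> real \<Rightarrow> qmat" where
  "rho_bloch rx rz = (\<chi> i j. (1/2) * (id2 $ i $ j + complex_of_real rx * sigma_x $ i $ j
                                        + complex_of_real rz * sigma_z $ i $ j))"

definition opt_value :: "real \<Rightarrow> real" where
  "opt_value \<delta> = 1/2 + \<delta> * sqrt ((1 + 4 * \<delta>^2) / 2)"

end

theory Submission imports Defs begin

text \<open>In Bloch coordinates \<open>x = 2 Re \<rho>\<^sub>1\<^sub>2\<close>, \<open>z = \<rho>\<^sub>1\<^sub>1 - \<rho>\<^sub>2\<^sub>2\<close> the two measurements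
  have bias \<open>z\<close> and \<open>x\<close>, so sending bit \<open>b\<close> wins with probability
  \<open>1/2 \<plusminus> \<delta> (p z + r x)\<close>, where \<open>p = 1/2 + \<delta>\<close>, \<open>r = 1/2 - \<delta>\<close>. Positivity of a density
  matrix confines \<open>(x, z)\<close> to the unit disc, so by Cauchy-Schwarz the bias is at most
  \<open>\<delta> sqrt (p\<^sup>2 + r\<^sup>2)\<close>, attained by the pure state with Bloch vector \<open>(r, p) / sqrt (p\<^sup>2 + r\<^sup>2)\<close>.\<close>

definition bloch_x :: "qmat \<Rightarrow> real" where
  "bloch_x \<rho> = 2 * Re (\<rho> $ 1 $ 2)"

definition bloch_z :: "qmat \<Rightarrow> real" where
  "bloch_z \<rho> = Re (\<rho> $ 1 $ 1) - Re (\<rho> $ 2 $ 2)"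

lemma expval_2:
  "expval \<rho> v = cnj (v$1) * (\<rho>$1$1 * v$1 + \<rho>$1$2 * v$2) + cnj (v$2) * (\<rho>$2$1 * v$1 + \<rho>$2$2 * v$2)"
  unfolding expval_def by (simp add: sum_2 matrix_vector_mult_def)

lemma trace2_2: "trace2 \<rho> = \<rho>$1$1 + \<rho>$2$2"
  unfolding trace2_def by (simp add: sum_2)

lemma Re_expval_real_vector:
  "Re (expval \<rho> (\<chi> i. if i = 1 then complex_of_real s else complex_of_real u))
     = s\<^sup>2 * Re (\<rho>$1$1) + u\<^sup>2 * Re (\<rho>$2$2) + s * u * (Re (\<rho>$1$2) + Re (\<rho>$2$1))"
  unfolding expval_2 by (simp add: power2_eq_square algebra_simps)

lemma density_Re_trace: "density \<rho> \<Longrightarrow> Re (\<rho>$1$1) + Re (\<rho>$2$2) = 1"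
  unfolding density_def trace2_2 by (metis one_complex.sel(1) plus_complex.sel(1))

lemma density_Re_offdiag: "density \<rho> \<Longrightarrow> Re (\<rho>$2$1) = Re (\<rho>$1$2)"
  unfolding density_def by (metis cnj.sel(1))

lemma density_real_quadratic_form_nonneg:
  assumes "density \<rho>"
  shows "s\<^sup>2 * Re (\<rho>$1$1) + u\<^sup>2 * Re (\<rho>$2$2) + 2 * s * u * Re (\<rho>$1$2) \<ge> 0"
proof -
  have "Re (expval \<rho> (\<chi> i. if i = 1 then complex_of_real s else complex_of_real u)) \<ge> 0"
    using assms unfolding density_def by blast
  then show ?thesis
    unfolding Re_expval_real_vector density_Re_offdiag[OF assms] by (simp add: algebra_simps)
qed

lemma density_bloch_norm_le_1:
  assumes "density \<rho>"
  shows "(bloch_x \<rho>)\<^sup>2 + (bloch_z \<rho>)\<^sup>2 \<le> 1"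
proof -
  define a d x where "a = Re (\<rho>$1$1)" and "d = Re (\<rho>$2$2)" and "x = Re (\<rho>$1$2)"
  have tr: "a + d = 1" using density_Re_trace[OF assms] by (simp add: a_def d_def x_def)
  note Q = density_real_quadratic_form_nonneg[OF assms, folded a_def d_def x_def]
  \<comment> \<open>evaluating the form at \<open>(x, -a)\<close> and \<open>(d, -x)\<close> gives \<open>a (ad - x\<^sup>2) \<ge> 0\<close> and \<open>d (ad - x\<^sup>2) \<ge> 0\<close>\<close>
  have "a * (a * d - x\<^sup>2) \<ge> 0" using Q[of x "-a"] by (simp add: power2_eq_square algebra_simps)
  moreover have "d * (a * d - x\<^sup>2) \<ge> 0" using Q[of d "-x"] by (simp add: power2_eq_square algebra_simps)
  ultimately have "(a + d) * (a * d - x\<^sup>2) \<ge> 0" by (simp add: distrib_right)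
  then have "x\<^sup>2 \<le> a * d" using tr by simp
  then have "(2 * x)\<^sup>2 + (a - d)\<^sup>2 \<le> (a + d)\<^sup>2" by (simp add: power2_eq_square algebra_simps)
  then show ?thesis using tr by (simp add: bloch_x_def bloch_z_def a_def d_def x_def)
qed

lemma prob_outcome_entries:
  "prob_outcome \<rho> 0 0 = Re (\<rho>$1$1)"
  "prob_outcome \<rho> 0 1 = Re (\<rho>$2$2)"
  "prob_outcome \<rho> 1 0 = (Re (\<rho>$1$1) + Re (\<rho>$2$2) + Re (\<rho>$1$2) + Re (\<rho>$2$1)) / 2"
  "prob_outcome \<rho> 1 1 = (Re (\<rho>$1$1) + Re (\<rho>$2$2) - Re (\<rho>$1$2) - Re (\<rho>$2$1)) / 2"
  unfolding prob_outcome_def meas_vec_def expval_2 ket0_def ket1_def ketp_def ketm_def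
  by (simp_all add: algebra_simps)

lemma prob_outcome_bloch:
  assumes "density \<rho>"
  shows "prob_outcome \<rho> 0 0 = (1 + bloch_z \<rho>) / 2" "prob_outcome \<rho> 0 1 = (1 - bloch_z \<rho>) / 2"
    "prob_outcome \<rho> 1 0 = (1 + bloch_x \<rho>) / 2" "prob_outcome \<rho> 1 1 = (1 - bloch_x \<rho>) / 2"
  using density_Re_trace[OF assms] density_Re_offdiag[OF assms]
  unfolding prob_outcome_entries bloch_x_def bloch_z_def by (simp_all add: field_simps)

lemma win_prob_bloch:
  assumes "density (\<rho> 0)" and "density (\<rho> 1)"
  shows "win_prob \<delta> q \<rho>
    = q 0 * (1/2 + \<delta> * ((1/2 + \<delta>) * bloch_z (\<rho> 0) + (1/2 - \<delta>) * bloch_x (\<rho> 0)))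
    + q 1 * (1/2 - \<delta> * ((1/2 + \<delta>) * bloch_z (\<rho> 1) + (1/2 - \<delta>) * bloch_x (\<rho> 1)))"
proof -
  have "win_prob \<delta> q \<rho> =
    q 0 * ((1/2 + \<delta>) * ((1/2 + \<delta>) * prob_outcome (\<rho> 0) 0 0 + (1/2 - \<delta>) * prob_outcome (\<rho> 0) 0 1)
      + (1/2 - \<delta>) * ((1/2 + \<delta>) * prob_outcome (\<rho> 0) 1 0 + (1/2 - \<delta>) * prob_outcome (\<rho> 0) 1 1))
  + q 1 * ((1/2 + \<delta>) * ((1/2 + \<delta>) * prob_outcome (\<rho> 1) 0 1 + (1/2 - \<delta>) * prob_outcome (\<rho> 1) 0 0)
      + (1/2 - \<delta>) * ((1/2 + \<delta>) * prob_outcome (\<rho> 1) 1 1 + (1/2 - \<delta>) * prob_outcome (\<rho> 1) 1 0))"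
    unfolding win_prob_def coin_def by (simp add: algebra_simps)
  then show ?thesis
    unfolding prob_outcome_bloch[OF assms(1)] prob_outcome_bloch[OF assms(2)] by (simp add: field_simps)
qed

lemma quadratic_form_nonneg:
  fixes A B C x y :: real
  assumes "A \<ge> 0" "C \<ge> 0" "B\<^sup>2 \<le> A * C"
  shows "A * x\<^sup>2 + C * y\<^sup>2 + 2 * B * x * y \<ge> 0"
proof (cases "A = 0")
  case True
  then show ?thesis using assms by simp
next
  case False
  have "A * (A * x\<^sup>2 + C * y\<^sup>2 + 2 * B * x * y) = (A * x + B * y)\<^sup>2 + (A * C - B\<^sup>2) * y\<^sup>2"
    by (simp add: algebra_simps power2_eq_square)
  also have "\<dots> \<ge> 0" using assms by simp
  finally show ?thesis using False assms(1) by (simp add: zero_le_mult_iff)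
qed

lemma abs_inner_le_sqrt_unit_disc:
  fixes p r x z :: real
  assumes "x\<^sup>2 + z\<^sup>2 \<le> 1"
  shows "\<bar>p * z + r * x\<bar> \<le> sqrt (p\<^sup>2 + r\<^sup>2)"
proof -
  have "(p * z + r * x)\<^sup>2 = (p\<^sup>2 + r\<^sup>2) * (x\<^sup>2 + z\<^sup>2) - (p * x - r * z)\<^sup>2"
    by (simp add: power2_eq_square algebra_simps)
  also have "\<dots> \<le> (p\<^sup>2 + r\<^sup>2) * (x\<^sup>2 + z\<^sup>2)"
    by simp
  also have "\<dots> \<le> p\<^sup>2 + r\<^sup>2"
    using mult_left_mono[OF assms, of "p\<^sup>2 + r\<^sup>2"] by simp
  finally show ?thesis by (metis real_sqrt_abs real_sqrt_le_mono)
qed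

lemma unit_disc_inner_attains_sqrt:
  fixes p r :: real
  assumes "p\<^sup>2 + r\<^sup>2 > 0"
  defines "S \<equiv> sqrt (p\<^sup>2 + r\<^sup>2)"
  shows "(r / S)\<^sup>2 + (p / S)\<^sup>2 = 1" and "p * (p / S) + r * (r / S) = S"
proof -
  have S_sq: "S\<^sup>2 = p\<^sup>2 + r\<^sup>2" and S_pos: "S > 0"
    using assms by (simp_all add: S_def)
  have "(r / S)\<^sup>2 + (p / S)\<^sup>2 = (p\<^sup>2 + r\<^sup>2) / S\<^sup>2"
    by (simp add: power_divide add_divide_distrib add.commute)
  then show "(r / S)\<^sup>2 + (p / S)\<^sup>2 = 1"
    using S_pos by (simp flip: S_sq)
  show "p * (p / S) + r * (r / S) = S"
    using S_pos S_sq by (simp add: field_simps power2_eq_square)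
qed

lemma win_prob_le:
  assumes "0 \<le> \<delta>" and "q 0 \<ge> 0" "q 1 \<ge> 0" "q 0 + q 1 = 1"
    and "density (\<rho> 0)" "density (\<rho> 1)"
  shows "win_prob \<delta> q \<rho> \<le> 1/2 + \<delta> * sqrt ((1/2 + \<delta>)\<^sup>2 + (1/2 - \<delta>)\<^sup>2)"
proof -
  define S where "S = sqrt ((1/2 + \<delta>)\<^sup>2 + (1/2 - \<delta>)\<^sup>2)"
  have bias: "\<bar>\<delta> * ((1/2 + \<delta>) * bloch_z (\<rho> b) + (1/2 - \<delta>) * bloch_x (\<rho> b))\<bar> \<le> \<delta> * S"
    if "density (\<rho> b)" for b
    using mult_left_mono[OF abs_inner_le_sqrt_unit_disc[OF density_bloch_norm_le_1[OF that]] assms(1)]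
    by (simp add: abs_mult S_def assms(1))
  have win0: "q 0 * (1/2 + \<delta> * ((1/2 + \<delta>) * bloch_z (\<rho> 0) + (1/2 - \<delta>) * bloch_x (\<rho> 0)))
      \<le> q 0 * (1/2 + \<delta> * S)"
    using bias[OF assms(5)] by (intro mult_left_mono assms(2)) (simp add: abs_le_iff)
  have win1: "q 1 * (1/2 - \<delta> * ((1/2 + \<delta>) * bloch_z (\<rho> 1) + (1/2 - \<delta>) * bloch_x (\<rho> 1)))
      \<le> q 1 * (1/2 + \<delta> * S)"
    using bias[OF assms(6)] by (intro mult_left_mono assms(3)) (simp add: abs_le_iff)
  have "win_prob \<delta> q \<rho> \<le> q 0 * (1/2 + \<delta> * S) + q 1 * (1/2 + \<delta> * S)"
    unfolding win_prob_bloch[OF assms(5,6)] using win0 win1 by linarith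
  also have "\<dots> = 1/2 + \<delta> * S"
    using assms(4) by (simp flip: distrib_right)
  finally show ?thesis unfolding S_def .
qed

lemma rho_bloch_entries:
  "rho_bloch rx rz $ 1 $ 1 = complex_of_real ((1 + rz) / 2)"
  "rho_bloch rx rz $ 1 $ 2 = complex_of_real (rx / 2)"
  "rho_bloch rx rz $ 2 $ 1 = complex_of_real (rx / 2)"
  "rho_bloch rx rz $ 2 $ 2 = complex_of_real ((1 - rz) / 2)"
  unfolding rho_bloch_def sigma_x_def sigma_z_def id2_def by (simp_all add: field_simps)

lemma bloch_rho_bloch: "bloch_x (rho_bloch rx rz) = rx" "bloch_z (rho_bloch rx rz) = rz"
  by (simp_all add: bloch_x_def bloch_z_def rho_bloch_entries field_simps)

lemma density_rho_bloch:
  assumes "rx\<^sup>2 + rz\<^sup>2 \<le> 1"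
  shows "density (rho_bloch rx rz)"
proof -
  have "rz\<^sup>2 \<le> 1" using assms by (smt (verit) zero_le_power2)
  then have rz: "0 \<le> 1 + rz" "0 \<le> 1 - rz" using abs_square_le_1[of rz] by auto
  have disc: "(rx / 2)\<^sup>2 \<le> (1 + rz) / 2 * ((1 - rz) / 2)"
    using assms by (simp add: power_divide algebra_simps power2_eq_square)
  have "Im (expval (rho_bloch rx rz) v) = 0 \<and> Re (expval (rho_bloch rx rz) v) \<ge> 0" for v
  proof -
    obtain s t u w where v: "v$1 = Complex s t" "v$2 = Complex u w" by (meson complex.exhaust_sel)
    have "Im (expval (rho_bloch rx rz) v) = 0"
      unfolding expval_2 rho_bloch_entries v by (simp add: algebra_simps) (simp add: field_simps)
    moreover have "Re (expval (rho_bloch rx rz) v)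
       = ((1 + rz)/2 * s\<^sup>2 + (1 - rz)/2 * u\<^sup>2 + 2 * (rx/2) * s * u)
       + ((1 + rz)/2 * t\<^sup>2 + (1 - rz)/2 * w\<^sup>2 + 2 * (rx/2) * t * w)"
      unfolding expval_2 rho_bloch_entries v by (simp add: power2_eq_square field_simps)
    ultimately show ?thesis
      using rz quadratic_form_nonneg[OF _ _ disc, of s u] quadratic_form_nonneg[OF _ _ disc, of t w]
      by simp
  qed
  moreover have "rho_bloch rx rz $ i $ j = cnj (rho_bloch rx rz $ j $ i)" for i j
    using exhaust_2[of i] exhaust_2[of j] by (auto simp: rho_bloch_entries)
  moreover have "trace2 (rho_bloch rx rz) = 1"
    unfolding trace2_2 rho_bloch_entries by (simp add: complex_eq_iff field_simps)
  ultimately show ?thesis unfolding density_def by blast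
qed

theorem mainTheorem6:
  fixes \<delta> :: real
  assumes "0 \<le> \<delta>" and "\<delta> \<le> 1/2"
  defines "rx \<equiv> (1 - 2*\<delta>) / sqrt (2 + 8*\<delta>^2)"
      and "rz \<equiv> (1 + 2*\<delta>) / sqrt (2 + 8*\<delta>^2)"
  shows "(\<forall>q \<rho>. q 0 \<ge> 0 \<and> q 1 \<ge> 0 \<and> q 0 + q 1 = 1 \<and> density (\<rho> 0) \<and> density (\<rho> 1)
            \<longrightarrow> win_prob \<delta> q \<rho> \<le> opt_value \<delta>)
       \<and> density (rho_bloch rx rz)
       \<and> win_prob \<delta> (\<lambda>b. if b = 0 then 1 else 0) (\<lambda>_. rho_bloch rx rz) = opt_value \<delta>
       \<and> opt_value 0 = 1/2 \<and> opt_value (1/2) = 1"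
proof -
  define p r where "p = 1/2 + \<delta>" and "r = 1/2 - \<delta>"
  define S where "S = sqrt (p\<^sup>2 + r\<^sup>2)"
  have pr: "p\<^sup>2 + r\<^sup>2 = (1 + 4 * \<delta>\<^sup>2) / 2"
    by (simp add: p_def r_def power2_eq_square algebra_simps)
  then have opt: "opt_value \<delta> = 1/2 + \<delta> * S" by (simp add: opt_value_def S_def)
  have "sqrt (2 + 8 * \<delta>\<^sup>2) = 2 * S"
    using pr by (intro real_sqrt_unique) (simp_all add: S_def power_mult_distrib)
  then have rxz: "rx = r / S" "rz = p / S"
    by (simp_all add: rx_def rz_def p_def r_def field_simps)
  have "p\<^sup>2 + r\<^sup>2 > 0" using assms(1) by (simp add: p_def add_pos_nonneg)
  note optimal = unit_disc_inner_attains_sqrt[OF this, folded S_def rxz]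
  have dens: "density (rho_bloch rx rz)" using optimal(1) by (simp add: density_rho_bloch)
  have "win_prob \<delta> (\<lambda>b. if b = 0 then 1 else 0) (\<lambda>_. rho_bloch rx rz) = opt_value \<delta>"
    using optimal(2) unfolding win_prob_bloch[OF dens dens] bloch_rho_bloch opt p_def r_def by simp
  moreover have "opt_value 0 = 1/2" "opt_value (1/2) = 1"
    by (simp_all add: opt_value_def power2_eq_square)
  ultimately show ?thesis
    using win_prob_le[OF assms(1)] dens by (auto simp: opt S_def p_def r_def)
qed

end
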